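(* Let $m\in\mathbb N$, $m\ge1$, and let $x_0,x_1\in\mathbb C_p$ with $|x_0|=|x_1|=\rho_m$ and $|x_0-x_1|\le S$. If $\lambda_0,\lambda_1\in\Lambda$ satisfy $$\rho_{m-1}\cdots\rho_1\,|x_0-x_1|<|\lambda_0-\lambda_1|\le S,$$ then $|Q^m_{\lambda_0}(x_0)-Q^m_{\lambda_1}(x_1)|=|\lambda_0-\lambda_1|$.
   Context: Let $p$ be a prime, $\mathbb C_p$ with $p$-adic absolute value, $|p|=1/p$. $\Lambda=\{\lambda\in\mathbb C_p:|\lambda-1|<1\}$, $P_\lambda(z)=\frac{\lambda}{p}z^p+\left(1-\frac{\lambda}{p}\right)z^{p+1}$, $\rho=p^{-1/(p-1)}$; $S>0$ is defined by $pS^{p-1}=\rho$; $\rho_0=1$ and $p\rho_n^p=\rho_{n-1}$ for $n\ge1$ (empty products equal $1$). Fix $\hat r\in|\mathbb C_p^*|$, $\hat r>1$, $B=\{z:|z|\le\hat r\}$; $\mathcal H(B)$ is the ring of power series $\sum a_iz^i$ convergent on $B$ with norm $\|f\|_B=\sup_i|a_i|\hat r^{\,i}$. Fix $Q\in\mathcal H(B)$ with $\|Q\|_B<\rho$, $Q^*_\lambda=P_\lambda+Q$, and let $h(\lambda)$ be the unique fixed point of $Q^*_\lambda$ in $\{z:|z-1|\le|Q(1)|/p\}$. Define $Q_\lambda(z)=P_\lambda(z+h(\lambda)-1)+Q(z+h(\lambda)-1)+1-h(\lambda)$ for $z\in B$. *)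

theory Defs
  imports "HOL-Analysis.Analysis" "HOL-Computational_Algebra.Polynomial"
begin

text \<open>A model of the field C_p: a field with a non-archimedean absolute value av,
  normalised by av p = 1/p, complete, algebraically closed, in which the algebraic
  numbers are dense. Such a field is isometrically isomorphic to C_p.\<close>

definition is_Cp :: "nat \<Rightarrow> ('a::field \<Rightarrow> real) \<Rightarrow> bool" where
  "is_Cp p av \<longleftrightarrow>
     (\<forall>x. 0 \<le> av x) \<and> (\<forall>x. av x = 0 \<longleftrightarrow> x = 0) \<and>
     (\<forall>x y. av (x * y) = av x * av y) \<and>
     (\<forall>x y. av (x + y) \<le> max (av x) (av y)) \<and>
     av (of_nat p) = 1 / real p \<and>
     (\<forall>X :: nat \<Rightarrow> 'a. (\<forall>e>0. \<exists>N. \<forall>m\<ge>N. \<forall>n\<ge>N. av (X m - X n) < e)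
          \<longrightarrow> (\<exists>L. (\<lambda>n. av (X n - L)) \<longlonglongrightarrow> 0)) \<and>
     (\<forall>q :: 'a poly. degree q > 0 \<longrightarrow> (\<exists>z. poly q z = 0)) \<and>
     (\<forall>x. \<forall>e>0. \<exists>y. av (x - y) < e \<and>
          (\<exists>q :: int poly. q \<noteq> 0 \<and> poly (map_poly of_int q) y = 0))"

definition ps_eval :: "('a::field \<Rightarrow> real) \<Rightarrow> (nat \<Rightarrow> 'a) \<Rightarrow> 'a \<Rightarrow> 'a" where
  "ps_eval av a z = (THE s. (\<lambda>n. av ((\<Sum>i<n. a i * z ^ i) - s)) \<longlonglongrightarrow> 0)"

text \<open>Membership in H(B), B the closed disc of radius rh: |a_i| rh^i \<rightarrow> 0.\<close>
definition in_HB :: "('a::field \<Rightarrow> real) \<Rightarrow> real \<Rightarrow> (nat \<Rightarrow> 'a) \<Rightarrow> bool" where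
  "in_HB av rh a \<longleftrightarrow> (\<lambda>i. av (a i) * rh ^ i) \<longlonglongrightarrow> 0"

definition norm_HB :: "('a::field \<Rightarrow> real) \<Rightarrow> real \<Rightarrow> (nat \<Rightarrow> 'a) \<Rightarrow> real" where
  "norm_HB av rh a = (SUP i. av (a i) * rh ^ i)"

definition Pl :: "nat \<Rightarrow> 'a::field \<Rightarrow> 'a \<Rightarrow> 'a" where
  "Pl p l z = l / of_nat p * z ^ p + (1 - l / of_nat p) * z ^ (p + 1)"

definition rho :: "nat \<Rightarrow> real" where
  "rho p = real p powr (- 1 / (real p - 1))"

text \<open>S > 0 with p S^(p-1) = rho.\<close>
definition S_const :: "nat \<Rightarrow> real" where
  "S_const p = (rho p / real p) powr (1 / (real p - 1))"

text \<open>rho_0 = 1, p rho_n^p = rho_(n-1).\<close>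
fun rho_seq :: "nat \<Rightarrow> nat \<Rightarrow> real" where
  "rho_seq p 0 = 1"
| "rho_seq p (Suc n) = (rho_seq p n / real p) powr (1 / real p)"

text \<open>h(lambda): the unique fixed point of P_lambda + Q in |z - 1| <= |Q(1)|/p.\<close>
definition hfix :: "nat \<Rightarrow> ('a::field \<Rightarrow> real) \<Rightarrow> (nat \<Rightarrow> 'a) \<Rightarrow> 'a \<Rightarrow> 'a" where
  "hfix p av a l = (THE z. av (z - 1) \<le> av (ps_eval av a 1) / real p \<and>
                           Pl p l z + ps_eval av a z = z)"

definition Qlam :: "nat \<Rightarrow> ('a::field \<Rightarrow> real) \<Rightarrow> (nat \<Rightarrow> 'a) \<Rightarrow> 'a \<Rightarrow> 'a \<Rightarrow> 'a" where
  "Qlam p av a l z = (let h = hfix p av a l in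
      Pl p l (z + h - 1) + ps_eval av a (z + h - 1) + 1 - h)"

end

theory Submission
  imports Defs "HOL-Computational_Algebra.Primes"
begin

(* Q_lambda maps the sphere |y| = rho_(j+1) onto |y| = rho_j, because there the term
  (lambda/p) z^p of P_lambda dominates. For y0, y1 on such a sphere,
    Q_lambda0(y0) - Q_lambda1(y1) = (lambda0 - lambda1)/p * z^p (1 - z) + E,
  where the first term has absolute value |lambda0 - lambda1| rho_j and
  |E| <= max(rho_j |y0 - y1|, |h(lambda0) - h(lambda1)|). The fixed point h(lambda) comes
  from a Newton-type contraction, and comparing the fixed point equations gives
  |h(lambda0) - h(lambda1)| = |lambda0 - lambda1| |h(lambda1) - 1| < |lambda0 - lambda1|.
  Hence after m - 1 steps the difference of the orbits stays below
  max(rho_(m-1) ... rho_1 |x0 - x1|, |lambda0 - lambda1| rho_1, |h(lambda0) - h(lambda1)|),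
  which is less than |lambda0 - lambda1|; in the last step rho_0 = 1, the parameter term
  dominates strictly and the ultrametric inequality becomes an equality. *)

section \<open>Non-archimedean absolute values\<close>

locale nonarch_abs =
  fixes av :: "'a::field \<Rightarrow> real"
  assumes av_nonneg: "0 \<le> av x"
    and av_eq_0_iff [simp]: "av x = 0 \<longleftrightarrow> x = 0"
    and av_mult: "av (x * y) = av x * av y"
    and av_add_le_max: "av (x + y) \<le> max (av x) (av y)"
begin

lemma av_0 [simp]: "av 0 = 0"
  by simp

lemma av_1 [simp]: "av 1 = 1"
  using av_mult[of 1 1] av_eq_0_iff[of 1] by simp

lemma av_minus [simp]: "av (- x) = av x"
proof -
  have "av (- 1) ^ 2 = 1"
    using av_mult[of "- 1" "- 1"] by (simp add: power2_eq_square)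
  then have "av (- 1) = 1"
    using av_nonneg[of "- 1"] by (auto simp: power2_eq_1_iff)
  then show ?thesis
    using av_mult[of "- 1" x] by simp
qed

lemma av_minus_commute: "av (x - y) = av (y - x)"
  by (metis av_minus minus_diff_eq)

lemma av_power: "av (x ^ n) = av x ^ n"
  by (induction n) (simp_all add: av_mult)

lemma av_divide: "av (x / y) = av x / av y"
proof (cases "y = 0")
  case False
  then have "av (inverse y) = inverse (av y)"
    using av_mult[of y "inverse y"] by (simp add: inverse_unique)
  then show ?thesis
    by (simp add: divide_inverse av_mult)
qed simp

lemma av_add_le: "av x \<le> M \<Longrightarrow> av y \<le> M \<Longrightarrow> av (x + y) \<le> M"
  using av_add_le_max[of x y] by simp

lemma av_diff_le: "av x \<le> M \<Longrightarrow> av y \<le> M \<Longrightarrow> av (x - y) \<le> M"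
  using av_add_le[of x M "- y"] by simp

lemma av_diff_le_max: "av (x - z) \<le> max (av (x - y)) (av (y - z))"
  using av_add_le_max[of "x - y" "y - z"] by simp

lemma av_diff_diff_le_max: "av ((x - y) - (u - v)) \<le> max (av (x - u)) (av (y - v))"
proof -
  have "av ((x - y) - (u - v)) = av ((x - u) + (v - y))"
    by (rule arg_cong[where f = av]) simp
  also have "\<dots> \<le> max (av (x - u)) (av (v - y))"
    by (rule av_add_le_max)
  finally show ?thesis
    by (simp only: av_minus_commute[of v y])
qed

lemma av_add_eq_left:
  assumes "av y < av x"
  shows "av (x + y) = av x"
proof -
  have "av x \<le> max (av (x + y)) (av y)"
    using av_add_le_max[of "x + y" "- y"] by simp
  then show ?thesis
    using av_add_le_max[of x y] assms by linarith
qed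

lemma av_eq_of_av_diff_less: "av (x - y) < av y \<Longrightarrow> av x = av y"
  using av_add_eq_left[of "x - y" y] by simp

lemma av_eq_1_of_av_diff_1_less: "av (x - 1) < 1 \<Longrightarrow> av x = 1"
  using av_eq_of_av_diff_less[of x 1] by simp

lemma av_of_nat_le_1: "av (of_nat n) \<le> 1"
  by (induction n) (auto intro: av_add_le)

lemma av_sum_le: "(\<And>i. i \<in> A \<Longrightarrow> av (f i) \<le> M) \<Longrightarrow> 0 \<le> M \<Longrightarrow> av (sum f A) \<le> M"
  by (induction A rule: infinite_finite_induct) (auto intro: av_add_le)

lemma av_power_diff_le:
  assumes "av x \<le> R" "av y \<le> R"
  shows "av (x ^ n - y ^ n) \<le> av (x - y) * R ^ (n - 1)"
proof (induction n)
  case (Suc n)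
  have R: "0 \<le> R"
    using assms(1) av_nonneg[of x] by linarith
  have "av (x * (x ^ n - y ^ n)) \<le> av (x - y) * R ^ n"
  proof (cases n)
    case (Suc k)
    have "av (x * (x ^ n - y ^ n)) \<le> R * (av (x - y) * R ^ (n - 1))"
      unfolding av_mult by (rule mult_mono[OF assms(1) Suc.IH R av_nonneg])
    then show ?thesis
      using Suc by (simp add: ac_simps)
  qed (simp add: av_nonneg)
  moreover have "av ((x - y) * y ^ n) \<le> av (x - y) * R ^ n"
    unfolding av_mult av_power by (intro mult_left_mono power_mono assms(2) av_nonneg)
  moreover have "x ^ Suc n - y ^ Suc n = x * (x ^ n - y ^ n) + (x - y) * y ^ n"
    by (simp add: algebra_simps)
  ultimately show ?case
    by (metis av_add_le diff_Suc_1)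
qed (simp add: av_nonneg)

lemma av_limit_unique:
  assumes "(\<lambda>n. av (s n - x)) \<longlonglongrightarrow> 0" "(\<lambda>n. av (s n - y)) \<longlonglongrightarrow> 0"
  shows "x = y"
proof -
  have "(\<lambda>n. max (av (s n - x)) (av (s n - y))) \<longlonglongrightarrow> max 0 0"
    by (intro tendsto_max assms)
  moreover have "av (x - y) \<le> max (av (s n - x)) (av (s n - y))" for n
    using av_diff_le_max[of x y "s n"] unfolding av_minus_commute[of x "s n"] av_minus_commute[of "s n" y] .
  ultimately have "av (x - y) \<le> 0"
    by (intro LIMSEQ_le_const) auto
  then show ?thesis
    using av_nonneg[of "x - y"] by simp
qed

lemma av_le_of_limit:
  assumes "(\<lambda>n. av (s n - x)) \<longlonglongrightarrow> 0" "\<And>n. av (s n) \<le> M"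
  shows "av x \<le> M"
proof -
  have "(\<lambda>n. max (av (s n - x)) M) \<longlonglongrightarrow> max 0 M"
    by (intro tendsto_max assms tendsto_const)
  moreover have "av x \<le> max (av (s n - x)) M" for n
    using av_add_le_max[of "x - s n" "s n"] av_minus_commute[of x "s n"] assms(2)[of n] by simp
  moreover have "0 \<le> M"
    using av_nonneg assms(2) order_trans by blast
  ultimately show ?thesis
    by (intro LIMSEQ_le_const) auto
qed

lemma av_diff_le_of_steps:
  assumes "\<And>k. n \<le> k \<Longrightarrow> av (s (Suc k) - s k) \<le> e" "0 \<le> e" "n \<le> m"
  shows "av (s m - s n) \<le> e"
  using assms(3)
proof (induction m rule: dec_induct)
  case (step k)
  then show ?case
    using av_add_le[of "s (Suc k) - s k" e "s k - s n"] assms(1) by simp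
qed (simp add: assms(2))

end

section \<open>Power series and contractions over a complete field\<close>

locale complete_nonarch_abs = nonarch_abs +
  assumes av_Cauchy_converges:
    "(\<forall>e>0. \<exists>N. \<forall>m\<ge>N. \<forall>n\<ge>N. av (X m - X n) < e) \<Longrightarrow> \<exists>L. (\<lambda>n. av (X n - L)) \<longlonglongrightarrow> 0"
begin

lemma av_converges_of_steps_tendsto_0:
  assumes steps: "(\<lambda>n. av (s (Suc n) - s n)) \<longlonglongrightarrow> 0"
  shows "\<exists>L. (\<lambda>n. av (s n - L)) \<longlonglongrightarrow> 0"
proof (rule av_Cauchy_converges, intro allI impI)
  fix e :: real
  assume "e > 0"
  then obtain N where N: "\<And>k. N \<le> k \<Longrightarrow> av (s (Suc k) - s k) < e / 2"
    using order_tendstoD(2)[OF steps, of "e / 2"] by (auto simp: eventually_sequentially)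
  have near: "av (s m - s N) \<le> e / 2" if "N \<le> m" for m
    using av_diff_le_of_steps[of N s "e / 2" m] N \<open>e > 0\<close> that by (simp add: less_imp_le)
  have "av (s m - s n) < e" if "N \<le> m" "N \<le> n" for m n
    using av_diff_le[OF near[OF that(1)] near[OF that(2)]] \<open>e > 0\<close> by simp
  then show "\<exists>N. \<forall>m\<ge>N. \<forall>n\<ge>N. av (s m - s n) < e"
    by blast
qed

lemma ps_eval_tendsto:
  assumes coeff: "(\<lambda>i. av (a i)) \<longlonglongrightarrow> 0" and z: "av z \<le> 1"
  shows "(\<lambda>n. av ((\<Sum>i<n. a i * z ^ i) - ps_eval av a z)) \<longlonglongrightarrow> 0"
proof -
  have "(\<lambda>n. av ((\<Sum>i<Suc n. a i * z ^ i) - (\<Sum>i<n. a i * z ^ i))) \<longlonglongrightarrow> 0"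
  proof (rule Lim_null_comparison[OF _ coeff], intro always_eventually allI)
    fix n
    have "av (a n) * av z ^ n \<le> av (a n)"
      using z av_nonneg by (simp add: mult_left_le power_le_one)
    then show "norm (av ((\<Sum>i<Suc n. a i * z ^ i) - (\<Sum>i<n. a i * z ^ i))) \<le> av (a n)"
      using av_nonneg by (simp add: av_mult av_power)
  qed
  then obtain L where L: "(\<lambda>n. av ((\<Sum>i<n. a i * z ^ i) - L)) \<longlonglongrightarrow> 0"
    using av_converges_of_steps_tendsto_0[of "\<lambda>n. \<Sum>i<n. a i * z ^ i"] by blast
  have "ps_eval av a z = L"
    unfolding ps_eval_def
    by (rule the_equality[where P = "\<lambda>s. (\<lambda>n. av ((\<Sum>i<n. a i * z ^ i) - s)) \<longlonglongrightarrow> 0", OF L])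
      (rule av_limit_unique[OF _ L])
  with L show ?thesis
    by simp
qed

lemma ps_eval_diff_le_of_partial_sums:
  assumes coeff: "(\<lambda>i. av (a i)) \<longlonglongrightarrow> 0" and z: "av z \<le> 1" and w: "av w \<le> 1"
    and partial: "\<And>n. av ((\<Sum>i<n. a i * z ^ i) - (\<Sum>i<n. a i * w ^ i)) \<le> B"
  shows "av (ps_eval av a z - ps_eval av a w) \<le> B"
proof (rule av_le_of_limit[OF _ partial])
  let ?d = "\<lambda>n. av ((\<Sum>i<n. a i * z ^ i) - ps_eval av a z) + av ((\<Sum>i<n. a i * w ^ i) - ps_eval av a w)"
  show "(\<lambda>n. av ((\<Sum>i<n. a i * z ^ i) - (\<Sum>i<n. a i * w ^ i) - (ps_eval av a z - ps_eval av a w))) \<longlonglongrightarrow> 0"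
  proof (rule Lim_null_comparison)
    show "?d \<longlonglongrightarrow> 0"
      using tendsto_add[OF ps_eval_tendsto[OF coeff z] ps_eval_tendsto[OF coeff w]] by simp
    show "\<forall>\<^sub>F n in sequentially. norm (av ((\<Sum>i<n. a i * z ^ i) - (\<Sum>i<n. a i * w ^ i)
        - (ps_eval av a z - ps_eval av a w))) \<le> ?d n"
    proof (intro always_eventually allI)
      fix n
      have "max (av ((\<Sum>i<n. a i * z ^ i) - ps_eval av a z)) (av ((\<Sum>i<n. a i * w ^ i) - ps_eval av a w)) \<le> ?d n"
        using av_nonneg by (simp add: add_increasing add_increasing2)
      then show "norm (av ((\<Sum>i<n. a i * z ^ i) - (\<Sum>i<n. a i * w ^ i)
          - (ps_eval av a z - ps_eval av a w))) \<le> ?d n"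
        using order_trans[OF av_diff_diff_le_max] av_nonneg by (simp add: abs_of_nonneg)
    qed
  qed
qed

lemma ps_eval_diff_le:
  assumes coeff: "(\<lambda>i. av (a i)) \<longlonglongrightarrow> 0" and bound: "\<And>i. av (a i) \<le> M"
    and z: "av z \<le> 1" and w: "av w \<le> 1"
  shows "av (ps_eval av a z - ps_eval av a w) \<le> M * av (z - w)"
proof (rule ps_eval_diff_le_of_partial_sums[OF coeff z w])
  have M: "0 \<le> M"
    using av_nonneg bound order_trans by blast
  have summand: "av (a i * (z ^ i - w ^ i)) \<le> M * av (z - w)" for i
  proof -
    have "av (z ^ i - w ^ i) \<le> av (z - w)"
      using av_power_diff_le[OF z w, of i] by simp
    then show ?thesis
      unfolding av_mult by (rule mult_mono[OF bound _ M av_nonneg])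
  qed
  fix n
  have "(\<Sum>i<n. a i * z ^ i) - (\<Sum>i<n. a i * w ^ i) = (\<Sum>i<n. a i * (z ^ i - w ^ i))"
    by (simp add: sum_subtractf right_diff_distrib)
  then show "av ((\<Sum>i<n. a i * z ^ i) - (\<Sum>i<n. a i * w ^ i)) \<le> M * av (z - w)"
    using av_sum_le[of "{..<n}", OF summand] M av_nonneg by simp
qed

lemma ps_eval_le:
  assumes coeff: "(\<lambda>i. av (a i)) \<longlonglongrightarrow> 0" and bound: "\<And>i. av (a i) \<le> M"
    and z: "av z \<le> 1"
  shows "av (ps_eval av a z) \<le> M"
proof (rule av_le_of_limit[OF ps_eval_tendsto[OF coeff z]])
  have M: "0 \<le> M"
    using av_nonneg bound order_trans by blast
  have summand: "av (a i * z ^ i) \<le> M" for i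
  proof -
    have "av (a i) * av z ^ i \<le> M * 1"
      by (rule mult_mono) (use bound z av_nonneg M in \<open>auto intro: power_le_one\<close>)
    then show ?thesis
      by (simp add: av_mult av_power)
  qed
  show "av (\<Sum>i<n. a i * z ^ i) \<le> M" for n
    by (intro av_sum_le summand M)
qed

lemma contraction_has_fixed_point:
  assumes maps: "\<And>z. av (z - c) \<le> r \<Longrightarrow> av (f z - c) \<le> r"
    and contracts: "\<And>x y. av (x - c) \<le> r \<Longrightarrow> av (y - c) \<le> r \<Longrightarrow> av (f x - f y) \<le> q * av (x - y)"
    and "0 \<le> r" "0 \<le> q" "q < 1"
  shows "\<exists>z. av (z - c) \<le> r \<and> f z = z"
proof -
  define s where "s n = (f ^^ n) c" for n
  have s_Suc: "s (Suc n) = f (s n)" for n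
    by (simp add: s_def)
  have ball: "av (s n - c) \<le> r" for n
    by (induction n) (simp_all add: s_def \<open>0 \<le> r\<close> maps)
  have steps_le: "av (s (Suc n) - s n) \<le> q ^ n * av (f c - c)" for n
  proof (induction n)
    case (Suc n)
    have "av (s (Suc (Suc n)) - s (Suc n)) \<le> q * av (s (Suc n) - s n)"
      unfolding s_Suc[of "Suc n"] s_Suc[of n] by (rule contracts[OF maps[OF ball] ball])
    also have "\<dots> \<le> q * (q ^ n * av (f c - c))"
      using Suc \<open>0 \<le> q\<close> by (rule mult_left_mono)
    finally show ?case
      by simp
  qed (simp add: s_def)
  have "(\<lambda>n. q ^ n * av (f c - c)) \<longlonglongrightarrow> 0"
    using \<open>0 \<le> q\<close> \<open>q < 1\<close> by (intro tendsto_mult_left_zero LIMSEQ_power_zero) simp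
  then have "(\<lambda>n. av (s (Suc n) - s n)) \<longlonglongrightarrow> 0"
    by (rule Lim_null_comparison[rotated], intro always_eventually allI)
      (simp add: steps_le abs_of_nonneg av_nonneg)
  then obtain L where L: "(\<lambda>n. av (s n - L)) \<longlonglongrightarrow> 0"
    using av_converges_of_steps_tendsto_0 by blast
  have L_ball: "av (L - c) \<le> r"
    by (rule av_le_of_limit[of "\<lambda>n. s n - c"]) (use L ball in simp_all)
  have "av (f L - L) \<le> max (q * av (s n - L)) (av (s (Suc n) - L))" for n
  proof -
    have "av (f L - f (s n)) \<le> q * av (s n - L)"
      using contracts[OF L_ball ball] av_minus_commute by metis
    then show ?thesis
      using av_diff_le_max[of "f L" L "f (s n)"] s_Suc[of n] by simp
  qed
  moreover have "(\<lambda>n. max (q * av (s n - L)) (av (s (Suc n) - L))) \<longlonglongrightarrow> max (q * 0) 0"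
    by (intro tendsto_max tendsto_mult_left L LIMSEQ_Suc[OF L])
  ultimately have "av (f L - L) \<le> 0"
    by (intro LIMSEQ_le_const) auto
  then show ?thesis
    using L_ball av_nonneg[of "f L - L"] by auto
qed

end

section \<open>The radii rho, S and rho_n\<close>

declare rho_seq.simps(2) [simp del]

context
  fixes p :: nat
  assumes p: "2 \<le> p"
begin

lemma rho_pos: "0 < rho p"
  using p by (simp add: rho_def)

lemma rho_power: "rho p ^ (p - 1) = 1 / real p"
proof -
  have "rho p ^ (p - 1) = real p powr (- 1 / (real p - 1) * real (p - 1))"
    using p by (simp add: rho_def powr_realpow[symmetric] powr_powr)
  also have "\<dots> = 1 / real p"
    using p by (simp add: of_nat_diff powr_minus_divide)
  finally show ?thesis .
qed

lemma rho_less_1: "rho p < 1"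
  using p by (simp add: rho_def powr_less_one)

lemma inverse_le_rho: "1 / real p \<le> rho p"
proof -
  have "rho p ^ (p - 1) \<le> rho p ^ 1"
    by (rule power_decreasing) (use p rho_pos rho_less_1 in auto)
  then show ?thesis
    unfolding rho_power by simp
qed

lemma rho_power_p: "real p * rho p ^ p = rho p"
  using p rho_power by (simp add: power_eq_if[of _ p])

lemma S_const_power: "real p * S_const p ^ (p - 1) = rho p"
proof -
  have "S_const p = root (p - 1) (rho p / real p)"
    using p rho_pos by (simp add: S_const_def root_powr_inverse of_nat_diff)
  then show ?thesis
    using p rho_pos by simp
qed

lemma S_const_le_rho: "S_const p \<le> rho p"
proof -
  have "real p * S_const p ^ (p - 1) \<le> real p * rho p ^ (p - 1)"
    unfolding S_const_power rho_power using rho_less_1 p by simp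
  then have "S_const p ^ (p - 1) \<le> rho p ^ (p - 1)"
    using p by simp
  moreover have "Suc (p - 2) = p - 1"
    using p by simp
  ultimately show ?thesis
    using power_le_imp_le_base[of "S_const p" "p - 2" "rho p"] rho_pos by simp
qed

lemma rho_seq_pos: "0 < rho_seq p j"
  using p by (induction j) (simp_all add: rho_seq.simps(2))

lemma rho_seq_Suc_power: "real p * rho_seq p (Suc j) ^ p = rho_seq p j"
proof -
  have "rho_seq p (Suc j) = root p (rho_seq p j / real p)"
    using p rho_seq_pos[of j] by (simp add: rho_seq.simps(2) root_powr_inverse)
  then show ?thesis
    using p rho_seq_pos[of j] by simp
qed

lemma le_of_power_p_le: "x ^ p \<le> y ^ p \<Longrightarrow> 0 \<le> y \<Longrightarrow> x \<le> (y::real)"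
  using power_le_imp_le_base[of x "p - 1" y] p by simp

lemma rho_seq_Suc_le: "rho_seq p (Suc j) \<le> rho_seq p j"
proof (induction j)
  case 0
  have "real p * rho_seq p (Suc 0) ^ p \<le> real p * 1 ^ p"
    using rho_seq_Suc_power[of 0] p by simp
  then have "rho_seq p (Suc 0) ^ p \<le> 1 ^ p"
    using p by simp
  then have "rho_seq p (Suc 0) \<le> 1"
    by (rule le_of_power_p_le) simp
  then show ?case
    by simp
next
  case (Suc j)
  then have "real p * rho_seq p (Suc (Suc j)) ^ p \<le> real p * rho_seq p (Suc j) ^ p"
    unfolding rho_seq_Suc_power .
  then have "rho_seq p (Suc (Suc j)) ^ p \<le> rho_seq p (Suc j) ^ p"
    using p by simp
  then show ?case
    by (rule le_of_power_p_le) (use rho_seq_pos in \<open>simp add: less_imp_le\<close>)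
qed

lemma rho_seq_antimono: "i \<le> j \<Longrightarrow> rho_seq p j \<le> rho_seq p i"
  by (rule lift_Suc_antimono_le[of "rho_seq p", OF rho_seq_Suc_le])

lemma rho_seq_le_1: "rho_seq p j \<le> 1"
  using rho_seq_antimono[of 0 j] by simp

lemma rho_seq_Suc_less_1: "rho_seq p (Suc j) < 1"
proof -
  have "real p * rho_seq p (Suc j) ^ p < real p * 1 ^ p"
    unfolding rho_seq_Suc_power using rho_seq_le_1[of j] p by simp
  then have "rho_seq p (Suc j) ^ p < 1 ^ p"
    using p by simp
  then show ?thesis
    by (rule power_less_imp_less_base) simp
qed

lemma rho_le_rho_seq: "rho p \<le> rho_seq p j"
proof (induction j)
  case 0
  then show ?case
    using rho_less_1 by simp
next
  case (Suc j)
  then have "real p * rho p ^ p \<le> real p * rho_seq p (Suc j) ^ p"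
    unfolding rho_power_p rho_seq_Suc_power .
  then have "rho p ^ p \<le> rho_seq p (Suc j) ^ p"
    using p by simp
  then show ?case
    by (rule le_of_power_p_le) (use rho_seq_pos in \<open>simp add: less_imp_le\<close>)
qed

lemma rho_seq_Suc_power_le: "rho_seq p (Suc j) ^ (p - 1) \<le> rho_seq p j"
proof -
  have "1 \<le> real p * rho p"
    using inverse_le_rho p by (simp add: divide_le_eq mult.commute)
  also have "\<dots> \<le> real p * rho_seq p (Suc j)"
    by (rule mult_left_mono[OF rho_le_rho_seq]) simp
  finally have "rho_seq p (Suc j) ^ (p - 1) * 1 \<le> rho_seq p (Suc j) ^ (p - 1) * (real p * rho_seq p (Suc j))"
    using rho_seq_pos by (intro mult_left_mono) (simp_all add: less_imp_le)
  also have "\<dots> = rho_seq p j"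
    using p rho_seq_Suc_power[of j] by (simp add: power_eq_if[of _ p] ac_simps)
  finally show ?thesis
    by simp
qed

lemma power_p_le_rho_seq_of_le_S_const:
  assumes "0 \<le> d" "d \<le> S_const p"
  shows "real p * d ^ p \<le> rho_seq p j * d"
proof -
  have "real p * d ^ (p - 1) \<le> real p * S_const p ^ (p - 1)"
    using assms by (intro mult_left_mono power_mono) simp_all
  then have "real p * d ^ (p - 1) \<le> rho_seq p j"
    using S_const_power rho_le_rho_seq[of j] by linarith
  then have "real p * d ^ (p - 1) * d \<le> rho_seq p j * d"
    using assms(1) by (rule mult_right_mono)
  then show ?thesis
    using p by (simp add: power_eq_if[of d p] ac_simps)
qed

end

section \<open>The polynomials P_lambda on the spheres of radius rho_n\<close>

lemma Pl_diff_param: "Pl p l0 z - Pl p l1 z = (l0 - l1) / of_nat p * (z ^ p * (1 - z))"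
  by (simp add: Pl_def algebra_simps diff_divide_distrib)

lemma Pl_one [simp]: "Pl p l 1 = 1"
  by (simp add: Pl_def)

locale padic_abs = nonarch_abs +
  fixes p :: nat
  assumes prime_p: "prime p" and av_of_nat_p: "av (of_nat p) = 1 / real p"
begin

lemma two_le_p: "2 \<le> p"
  using prime_p by (rule prime_ge_2_nat)

lemma of_nat_p_neq_0: "(of_nat p :: 'a) \<noteq> 0"
  using av_of_nat_p two_le_p by auto

lemma av_of_nat_le_of_dvd:
  assumes "p dvd n"
  shows "av (of_nat n) \<le> 1 / real p"
proof -
  obtain q where "n = p * q"
    using assms by (rule dvdE)
  then show ?thesis
    using av_of_nat_le_1[of q] two_le_p by (simp add: av_mult av_of_nat_p divide_right_mono)
qed

lemma av_add_power_p_diff_le: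
  assumes "av d \<le> av z"
  shows "av ((z + d) ^ p - z ^ p) \<le> max (av z ^ (p - 1) * av d / real p) (av d ^ p)"
proof -
  let ?M = "max (av z ^ (p - 1) * av d / real p) (av d ^ p)"
  have "(z + d) ^ p = (\<Sum>k=0..p. of_nat (p choose k) * d ^ k * z ^ (p - k))"
    using binomial_ring[of d z p] by (simp add: atMost_atLeast0 add.commute)
  also have "\<dots> = z ^ p + (\<Sum>k=1..p. of_nat (p choose k) * d ^ k * z ^ (p - k))"
    by (simp add: sum.atLeast_Suc_atMost)
  finally have expand: "(z + d) ^ p - z ^ p = (\<Sum>k\<in>{1..p}. of_nat (p choose k) * d ^ k * z ^ (p - k))"
    by simp
  have summand: "av (of_nat (p choose k) * d ^ k * z ^ (p - k)) \<le> ?M" if k: "k \<in> {1..p}" for k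
  proof (cases "k = p")
    case False
    then have "p dvd (p choose k)"
      using k prime_p by (intro dvd_choose_prime) auto
    then have "av (of_nat (p choose k) :: 'a) \<le> 1 / real p"
      by (rule av_of_nat_le_of_dvd)
    moreover have "av d ^ k * av z ^ (p - k) \<le> av d * av z ^ (p - 1)"
    proof -
      have "av d ^ (k - 1) \<le> av z ^ (k - 1)"
        using assms av_nonneg by (rule power_mono)
      then have "av d * av d ^ (k - 1) * av z ^ (p - k) \<le> av d * av z ^ (k - 1) * av z ^ (p - k)"
        using av_nonneg by (intro mult_right_mono mult_left_mono) simp_all
      moreover have "k - 1 + (p - k) = p - 1"
        using k by simp
      ultimately show ?thesis
        using k by (simp add: power_add[symmetric] power_eq_if[of _ k] mult.assoc split: if_splits)
    qed
    ultimately have "av (of_nat (p choose k) * d ^ k * z ^ (p - k)) \<le> 1 / real p * (av d * av z ^ (p - 1))"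
      unfolding av_mult av_power mult.assoc by (rule mult_mono) (simp_all add: av_nonneg)
    then show ?thesis
      by (simp add: ac_simps)
  qed (simp add: av_mult av_power)
  show ?thesis
    unfolding expand by (intro av_sum_le summand max.coboundedI2 zero_le_power av_nonneg)
qed

lemma av_div_p: "av (l - 1) < 1 \<Longrightarrow> av (l / of_nat p) = real p"
  using two_le_p by (simp add: av_divide av_of_nat_p av_eq_1_of_av_diff_1_less)

lemma av_p_div: "av (l - 1) < 1 \<Longrightarrow> av (of_nat p / l) = 1 / real p"
  by (simp add: av_divide av_of_nat_p av_eq_1_of_av_diff_1_less)

lemma av_one_minus_div_p:
  assumes "av (l - 1) < 1"
  shows "av (1 - l / of_nat p) = real p"
proof -
  have "av (of_nat p - l) = 1"
    using av_add_eq_left[of "of_nat p" "- l"] av_eq_1_of_av_diff_1_less[OF assms] av_of_nat_p two_le_p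
    by simp
  moreover have "1 - l / of_nat p = (of_nat p - l) / of_nat p"
    using of_nat_p_neq_0 by (simp add: field_simps)
  ultimately show ?thesis
    using two_le_p by (simp add: av_divide av_of_nat_p)
qed

lemma av_Pl_level:
  assumes l: "av (l - 1) < 1" and z: "av z = rho_seq p (Suc j)"
  shows "av (Pl p l z) = rho_seq p j"
proof -
  have lead: "av (l / of_nat p * z ^ p) = rho_seq p j"
    unfolding av_mult av_power av_div_p[OF l] z by (rule rho_seq_Suc_power[OF two_le_p])
  have "av ((1 - l / of_nat p) * z ^ (p + 1)) = rho_seq p j * rho_seq p (Suc j)"
    unfolding av_mult av_power av_one_minus_div_p[OF l] z rho_seq_Suc_power[OF two_le_p, of j, symmetric]
    by simp
  also have "\<dots> < rho_seq p j"
    using rho_seq_pos[OF two_le_p, of j] rho_seq_Suc_less_1[OF two_le_p, of j] by simp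
  finally show ?thesis
    unfolding Pl_def using av_add_eq_left lead by simp
qed

lemma av_power_p_diff_le:
  assumes w: "av w = rho_seq p (Suc j)" and zw: "av (z - w) \<le> S_const p"
  shows "real p * av (z ^ p - w ^ p) \<le> rho_seq p j * av (z - w)"
proof -
  define d where "d = av (z - w)"
  have "d \<le> av w"
    using zw S_const_le_rho[OF two_le_p] rho_le_rho_seq[OF two_le_p, of "Suc j"] w unfolding d_def by linarith
  then have "av ((w + (z - w)) ^ p - w ^ p) \<le> max (rho_seq p (Suc j) ^ (p - 1) * d / real p) (d ^ p)"
    unfolding d_def w[symmetric] by (rule av_add_power_p_diff_le)
  then have "real p * av (z ^ p - w ^ p) \<le> real p * max (rho_seq p (Suc j) ^ (p - 1) * d / real p) (d ^ p)"
    by (simp add: mult_left_mono)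
  also have "\<dots> = max (rho_seq p (Suc j) ^ (p - 1) * d) (real p * d ^ p)"
    using two_le_p by (simp add: max_mult_distrib_left)
  also have "\<dots> \<le> rho_seq p j * d"
    using rho_seq_Suc_power_le[OF two_le_p] power_p_le_rho_seq_of_le_S_const[OF two_le_p _ zw] av_nonneg
    unfolding d_def by (simp add: mult_right_mono)
  finally show ?thesis
    unfolding d_def .
qed

lemma av_Pl_diff_le:
  assumes l: "av (l - 1) < 1" and z: "av z = rho_seq p (Suc j)" and w: "av w = rho_seq p (Suc j)"
    and zw: "av (z - w) \<le> S_const p"
  shows "av (Pl p l z - Pl p l w) \<le> rho_seq p j * av (z - w)"
proof -
  have "Pl p l z - Pl p l w = l / of_nat p * (z ^ p - w ^ p) + (1 - l / of_nat p) * (z ^ Suc p - w ^ Suc p)"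
    by (simp add: Pl_def algebra_simps)
  moreover have "av (l / of_nat p * (z ^ p - w ^ p)) \<le> rho_seq p j * av (z - w)"
    unfolding av_mult av_div_p[OF l] using av_power_p_diff_le[OF w zw] .
  moreover have "av ((1 - l / of_nat p) * (z ^ Suc p - w ^ Suc p)) \<le> rho_seq p j * av (z - w)"
  proof -
    have "av (z ^ Suc p - w ^ Suc p) \<le> av (z - w) * rho_seq p (Suc j) ^ p"
      using av_power_diff_le[of z "rho_seq p (Suc j)" w "Suc p"] z w by simp
    then have "real p * av (z ^ Suc p - w ^ Suc p) \<le> av (z - w) * (real p * rho_seq p (Suc j) ^ p)"
      using two_le_p by simp
    then show ?thesis
      unfolding av_mult av_one_minus_div_p[OF l] rho_seq_Suc_power[OF two_le_p] by (simp add: mult.commute)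
  qed
  ultimately show ?thesis
    by (simp add: av_add_le)
qed

lemma av_Pl_diff_param:
  assumes z: "av z = rho_seq p (Suc j)"
  shows "av (Pl p l0 z - Pl p l1 z) = av (l0 - l1) * rho_seq p j"
proof -
  have "av (1 - z) = 1"
    using av_add_eq_left[of "- z" 1] z rho_seq_Suc_less_1[OF two_le_p] by simp
  then show ?thesis
    unfolding Pl_diff_param av_mult av_divide av_power av_of_nat_p z
    using rho_seq_Suc_power[OF two_le_p, of j] two_le_p by (simp add: field_simps)
qed

end

section \<open>The perturbed family Q_lambda\<close>

(* Only a bound M on the coefficients of Q is used; the theorem takes M = norm_HB av rh a. *)
locale small_perturbation = complete_nonarch_abs av + padic_abs av p
  for av :: "'a::field \<Rightarrow> real" and p :: nat +
  fixes a :: "nat \<Rightarrow> 'a" and M :: real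
  assumes coeff_tendsto_0: "(\<lambda>i. av (a i)) \<longlonglongrightarrow> 0"
    and coeff_le: "av (a i) \<le> M"
    and M_less_rho: "M < rho p"
begin

abbreviation Q :: "'a \<Rightarrow> 'a" where
  "Q \<equiv> ps_eval av a"

abbreviation h :: "'a \<Rightarrow> 'a" where
  "h \<equiv> hfix p av a"

lemma M_nonneg: "0 \<le> M"
  using av_nonneg coeff_le order_trans by blast

lemma M_less_1: "M < 1"
  using M_less_rho rho_less_1[OF two_le_p] by linarith

lemma M_div_p_le: "M / real p \<le> M"
  using M_nonneg two_le_p by (simp add: divide_le_eq mult_le_cancel_left1)

lemma M_div_p_less_rho: "M / real p < rho p"
  using M_div_p_le M_less_rho by linarith

lemma M_div_p_less_1: "M / real p < 1"
  using M_div_p_less_rho rho_less_1[OF two_le_p] by linarith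

lemma Q_le: "av z \<le> 1 \<Longrightarrow> av (Q z) \<le> M"
  by (rule ps_eval_le[OF coeff_tendsto_0 coeff_le])

lemma Q_diff_le: "av z \<le> 1 \<Longrightarrow> av w \<le> 1 \<Longrightarrow> av (Q z - Q w) \<le> M * av (z - w)"
  by (rule ps_eval_diff_le[OF coeff_tendsto_0 coeff_le])

lemma av_le_1_of_near_1: "av (z - 1) \<le> M / real p \<Longrightarrow> av z \<le> 1"
  using av_add_le[of 1 1 "z - 1"] M_div_p_less_1 by simp

lemma Q_1_div_p_le: "av (Q 1) / real p \<le> M / real p"
  using Q_le[of 1] two_le_p by (simp add: divide_right_mono)

definition defect :: "'a \<Rightarrow> 'a \<Rightarrow> 'a" where
  "defect l z = Pl p l z + Q z - z"

lemma defect_diff_plus_linear_le: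
  assumes l: "av (l - 1) < 1" and z: "av (z - 1) \<le> M / real p" and w: "av (w - 1) \<le> M / real p"
  shows "av (defect l z - defect l w + l / of_nat p * (z - w)) \<le> av (z - w)"
proof -
  define c where "c = l / (of_nat p :: 'a)"
  define d where "d = av (z - w)"
  have z1: "av z \<le> 1" and w1: "av w \<le> 1"
    using z w by (simp_all add: av_le_1_of_near_1)
  have "defect l z - defect l w + c * (z - w) = c * ((z - w) * (1 - z ^ p) + (w - 1) * (w ^ p - z ^ p))
      + (z ^ Suc p - w ^ Suc p) + (Q z - Q w) - (z - w)"
    unfolding defect_def Pl_def c_def[symmetric] by (simp add: algebra_simps)
  moreover have "av (c * ((z - w) * (1 - z ^ p) + (w - 1) * (w ^ p - z ^ p))) \<le> d"
  proof -
    have "av (1 - z ^ p) \<le> M / real p"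
      using av_power_diff_le[of z 1 1 p] z1 z av_minus_commute[of 1 "z ^ p"] by simp
    then have "av ((z - w) * (1 - z ^ p)) \<le> d * (M / real p)"
      unfolding av_mult d_def by (rule mult_left_mono[OF _ av_nonneg])
    moreover have "av ((w - 1) * (w ^ p - z ^ p)) \<le> M / real p * d"
      using av_power_diff_le[OF w1 z1, of p] av_minus_commute[of w z] unfolding av_mult d_def
      by (intro mult_mono w) (simp_all add: av_nonneg M_nonneg)
    ultimately have "av ((z - w) * (1 - z ^ p) + (w - 1) * (w ^ p - z ^ p)) \<le> d * (M / real p)"
      by (simp add: av_add_le mult.commute)
    then have "av (c * ((z - w) * (1 - z ^ p) + (w - 1) * (w ^ p - z ^ p))) \<le> d * M"
      using two_le_p unfolding av_mult c_def av_div_p[OF l] by (simp add: field_simps)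
    then show ?thesis
      using mult_left_le[of M d] M_less_1 av_nonneg[of "z - w"] unfolding d_def by linarith
  qed
  moreover have "av (z ^ Suc p - w ^ Suc p) \<le> d"
    using av_power_diff_le[OF z1 w1, of "Suc p"] by (simp add: d_def)
  moreover have "av (Q z - Q w) \<le> d"
    using Q_diff_le[OF z1 w1] mult_left_le_one_le[of d M] M_less_1 M_nonneg av_nonneg[of "z - w"]
    unfolding d_def by linarith
  ultimately show ?thesis
    by (simp add: c_def d_def av_add_le av_diff_le)
qed

lemma av_defect_diff:
  assumes l: "av (l - 1) < 1" and z: "av (z - 1) \<le> M / real p" and w: "av (w - 1) \<le> M / real p"
  shows "av (defect l z - defect l w) = real p * av (z - w)"
proof (cases "z = w")
  case False
  let ?lin = "- (l / of_nat p * (z - w))"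
  have lin: "av ?lin = real p * av (z - w)"
    by (simp only: av_minus av_mult av_div_p[OF l])
  have "0 < av (z - w)"
    using False av_nonneg[of "z - w"] by (simp add: less_le)
  then have "av (z - w) < av ?lin"
    unfolding lin using two_le_p by simp
  then have "av (defect l z - defect l w + l / of_nat p * (z - w)) < av ?lin"
    using defect_diff_plus_linear_le[OF l z w] by linarith
  moreover have "defect l z - defect l w = ?lin + (defect l z - defect l w + l / of_nat p * (z - w))"
    by simp
  ultimately show ?thesis
    using av_add_eq_left lin by metis
qed simp

(* Near 1 the derivative of the defect is -lambda/p up to terms of absolute value at most 1
  (defect_diff_plus_linear_le), so this Newton-type step is a 1/p-contraction. *)
definition newton :: "'a \<Rightarrow> 'a \<Rightarrow> 'a" where
  "newton l z = z + of_nat p / l * defect l z"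

lemma av_newton_diff_le:
  assumes l: "av (l - 1) < 1" and z: "av (z - 1) \<le> M / real p" and w: "av (w - 1) \<le> M / real p"
  shows "av (newton l z - newton l w) \<le> 1 / real p * av (z - w)"
proof -
  have "l \<noteq> 0"
    using av_eq_1_of_av_diff_1_less[OF l] by auto
  then have "newton l z - newton l w = of_nat p / l * (defect l z - defect l w + l / of_nat p * (z - w))"
    using of_nat_p_neq_0 by (simp add: newton_def field_simps)
  then have "av (newton l z - newton l w) = 1 / real p * av (defect l z - defect l w + l / of_nat p * (z - w))"
    by (simp only: av_mult av_p_div[OF l])
  also have "\<dots> \<le> 1 / real p * av (z - w)"
    by (intro mult_left_mono defect_diff_plus_linear_le[OF l z w]) simp
  finally show ?thesis .
qed

lemma av_newton_1:
  assumes "av (l - 1) < 1"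
  shows "av (newton l 1 - 1) = av (Q 1) / real p"
proof -
  have "newton l 1 - 1 = of_nat p / l * Q 1"
    by (simp add: newton_def defect_def)
  then show ?thesis
    by (simp only: av_mult av_p_div[OF assms]) simp
qed

lemma defect_has_zero:
  assumes l: "av (l - 1) < 1"
  shows "\<exists>z. av (z - 1) \<le> av (Q 1) / real p \<and> defect l z = 0"
proof -
  define r where "r = av (Q 1) / real p"
  have r: "0 \<le> r" "r \<le> M / real p"
    unfolding r_def by (simp_all add: av_nonneg Q_1_div_p_le)
  have contracts: "av (newton l z - newton l w) \<le> 1 / real p * av (z - w)"
    if "av (z - 1) \<le> r" "av (w - 1) \<le> r" for z w
    using that r by (intro av_newton_diff_le[OF l]) simp_all
  have maps: "av (newton l z - 1) \<le> r" if "av (z - 1) \<le> r" for z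
  proof -
    have "av (newton l z - newton l 1) \<le> 1 / real p * av (z - 1)"
      using that r by (intro contracts) simp_all
    also have "\<dots> \<le> av (z - 1)"
      using two_le_p av_nonneg[of "z - 1"] by (simp add: divide_le_eq mult_le_cancel_left1)
    finally show ?thesis
      using that av_diff_le_max[of "newton l z" 1 "newton l 1"] av_newton_1[OF l] r_def by simp
  qed
  obtain z where "av (z - 1) \<le> r" "newton l z = z"
    using contraction_has_fixed_point[OF maps contracts r(1)] two_le_p by fastforce
  then show ?thesis
    using av_eq_1_of_av_diff_1_less[OF l] of_nat_p_neq_0 by (auto simp: newton_def r_def)
qed

lemma hfix:
  assumes l: "av (l - 1) < 1"
  shows "av (h l - 1) \<le> av (Q 1) / real p \<and> defect l (h l) = 0"
proof -
  have defect_eq_0: "defect l z = 0 \<longleftrightarrow> Pl p l z + Q z = z" for z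
    by (simp add: defect_def)
  obtain z where z: "av (z - 1) \<le> av (Q 1) / real p" "defect l z = 0"
    using defect_has_zero[OF l] by blast
  have "y = z" if "av (y - 1) \<le> av (Q 1) / real p" "defect l y = 0" for y
    using av_defect_diff[OF l, of y z] that z Q_1_div_p_le two_le_p by simp
  then have "\<exists>!z. av (z - 1) \<le> av (Q 1) / real p \<and> Pl p l z + Q z = z"
    using z unfolding defect_eq_0 by blast
  then show ?thesis
    unfolding hfix_def defect_eq_0 by (rule theI')
qed

lemma hfix_near_1: "av (l - 1) < 1 \<Longrightarrow> av (h l - 1) \<le> M / real p"
  using hfix[of l] Q_1_div_p_le by fastforce

lemma defect_hfix: "av (l - 1) < 1 \<Longrightarrow> defect l (h l) = 0"
  using hfix by blast

lemma av_hfix_diff: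
  assumes l0: "av (l0 - 1) < 1" and l1: "av (l1 - 1) < 1"
  shows "av (h l0 - h l1) = av (l0 - l1) * av (h l1 - 1)"
proof -
  have "defect l0 (h l1) = defect l0 (h l1) - defect l1 (h l1)"
    using defect_hfix[OF l1] by simp
  also have "\<dots> = (l0 - l1) / of_nat p * (h l1 ^ p * (1 - h l1))"
    by (simp add: defect_def Pl_diff_param)
  finally have "av (defect l0 (h l1)) = av (l0 - l1) * real p * av (h l1 - 1)"
    using av_eq_1_of_av_diff_1_less[of "h l1"] hfix_near_1[OF l1] M_div_p_less_1 two_le_p
    by (simp add: av_mult av_divide av_power av_of_nat_p av_minus_commute[of 1])
  moreover have "av (defect l0 (h l1)) = real p * av (h l0 - h l1)"
    using av_defect_diff[OF l0 hfix_near_1[OF l0] hfix_near_1[OF l1]] defect_hfix[OF l0] by simp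
  ultimately show ?thesis
    using two_le_p by simp
qed

lemma av_hfix_diff_le:
  assumes l0: "av (l0 - 1) < 1" and l1: "av (l1 - 1) < 1"
  shows "av (h l0 - h l1) \<le> av (l0 - l1)"
  using av_hfix_diff[OF l0 l1] hfix_near_1[OF l1] M_div_p_less_1 av_nonneg[of "l0 - l1"]
  by (simp add: mult_left_le)

lemma av_shift_by_hfix:
  assumes l: "av (l - 1) < 1" and y: "rho p \<le> av y"
  shows "av (y + h l - 1) = av y"
  using av_add_eq_left[of "h l - 1" y] hfix_near_1[OF l] M_div_p_less_rho y by (simp add: add_diff_eq)

lemma Qlam_eq: "Qlam p av a l y = Pl p l (y + h l - 1) + Q (y + h l - 1) + 1 - h l"
  by (simp add: Qlam_def Let_def)

lemma av_Qlam_level: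
  assumes l: "av (l - 1) < 1" and y: "av y = rho_seq p (Suc j)"
  shows "av (Qlam p av a l y) = rho_seq p j"
proof -
  define z where "z = y + h l - 1"
  have z: "av z = rho_seq p (Suc j)"
    unfolding z_def using av_shift_by_hfix[OF l] y rho_le_rho_seq[OF two_le_p] by simp
  have rho_j: "rho p \<le> rho_seq p j"
    by (rule rho_le_rho_seq[OF two_le_p])
  have "av (Q z) < rho_seq p j"
    using Q_le[of z] z rho_seq_le_1[OF two_le_p] M_less_rho rho_j by simp
  moreover have "av (1 - h l) < rho_seq p j"
    using hfix_near_1[OF l] M_div_p_less_rho rho_j av_minus_commute[of 1] by simp
  ultimately have "av (Q z + (1 - h l)) < av (Pl p l z)"
    using av_add_le_max[of "Q z" "1 - h l"] av_Pl_level[OF l z] by simp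
  moreover have "Qlam p av a l y = Pl p l z + (Q z + (1 - h l))"
    unfolding Qlam_eq z_def by simp
  ultimately show ?thesis
    using av_add_eq_left av_Pl_level[OF l z] by simp
qed

lemma Q_diff_le_rho_seq: "av z \<le> 1 \<Longrightarrow> av w \<le> 1 \<Longrightarrow> av (Q z - Q w) \<le> rho_seq p j * av (z - w)"
  using Q_diff_le[of z w] M_less_rho rho_le_rho_seq[OF two_le_p, of j]
    mult_right_mono[of M "rho_seq p j" "av (z - w)"] av_nonneg[of "z - w"] by simp

lemma av_Pl_plus_Q_diff_le:
  assumes l: "av (l - 1) < 1" and z: "av z = rho_seq p (Suc j)" and w: "av w = rho_seq p (Suc j)"
    and zw: "av (z - w) \<le> S_const p"
  shows "av (Pl p l z + Q z - (Pl p l w + Q w)) \<le> rho_seq p j * av (z - w)"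
proof -
  have "av (Q z - Q w) \<le> rho_seq p j * av (z - w)"
    using z w rho_seq_le_1[OF two_le_p] by (intro Q_diff_le_rho_seq) simp_all
  then have "av (Pl p l z - Pl p l w + (Q z - Q w)) \<le> rho_seq p j * av (z - w)"
    using av_Pl_diff_le[OF l z w zw] by (simp add: av_add_le)
  then show ?thesis
    by (simp add: algebra_simps)
qed

(* The main term L is P_lambda0(z1) - P_lambda1(z1) with z1 = y1 + h(lambda1) - 1. *)
lemma Qlam_diff_decomposition:
  assumes l0: "av (l0 - 1) < 1" and l1: "av (l1 - 1) < 1"
    and y0: "av y0 = rho_seq p (Suc j)" and y1: "av y1 = rho_seq p (Suc j)"
    and y: "av (y0 - y1) \<le> S_const p" and l: "av (l0 - l1) \<le> S_const p"
  shows "\<exists>L. av L = av (l0 - l1) * rho_seq p j \<and>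
    av (Qlam p av a l0 y0 - Qlam p av a l1 y1 - L) \<le> max (rho_seq p j * av (y0 - y1)) (av (h l0 - h l1))"
proof -
  define z0 where "z0 = y0 + h l0 - 1"
  define z1 where "z1 = y1 + h l1 - 1"
  have rho_j: "0 \<le> rho_seq p j" "rho_seq p j \<le> 1"
    using rho_seq_pos[OF two_le_p] rho_seq_le_1[OF two_le_p] by (auto simp: less_imp_le)
  have z0: "av z0 = rho_seq p (Suc j)" and z1: "av z1 = rho_seq p (Suc j)"
    unfolding z0_def z1_def using av_shift_by_hfix l0 l1 y0 y1 rho_le_rho_seq[OF two_le_p] by simp_all
  have "z0 - z1 = (y0 - y1) + (h l0 - h l1)"
    unfolding z0_def z1_def by simp
  then have z: "av (z0 - z1) \<le> max (av (y0 - y1)) (av (h l0 - h l1))"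
    using av_add_le_max by simp
  then have "av (z0 - z1) \<le> S_const p"
    using y l av_hfix_diff_le[OF l0 l1] by simp
  then have "av (Pl p l0 z0 + Q z0 - (Pl p l0 z1 + Q z1)) \<le> rho_seq p j * av (z0 - z1)"
    by (rule av_Pl_plus_Q_diff_le[OF l0 z0 z1])
  also have "\<dots> \<le> rho_seq p j * max (av (y0 - y1)) (av (h l0 - h l1))"
    using z rho_j(1) by (rule mult_left_mono)
  also have "\<dots> = max (rho_seq p j * av (y0 - y1)) (rho_seq p j * av (h l0 - h l1))"
    using rho_j(1) by (simp add: max_mult_distrib_left)
  also have "\<dots> \<le> max (rho_seq p j * av (y0 - y1)) (av (h l0 - h l1))"
    using mult_left_le_one_le[OF av_nonneg rho_j] by (intro max.mono) simp_all
  finally have "av (Pl p l0 z0 + Q z0 - (Pl p l0 z1 + Q z1) - (h l0 - h l1))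
      \<le> max (rho_seq p j * av (y0 - y1)) (av (h l0 - h l1))"
    by (rule av_diff_le) simp
  moreover have "Qlam p av a l0 y0 - Qlam p av a l1 y1 - (Pl p l0 z1 - Pl p l1 z1)
      = Pl p l0 z0 + Q z0 - (Pl p l0 z1 + Q z1) - (h l0 - h l1)"
    unfolding Qlam_eq z0_def[symmetric] z1_def[symmetric] by simp
  ultimately show ?thesis
    using av_Pl_diff_param[OF z1] by (metis (no_types, lifting))
qed

lemma av_Qlam_diff_le:
  assumes l0: "av (l0 - 1) < 1" and l1: "av (l1 - 1) < 1"
    and y0: "av y0 = rho_seq p (Suc j)" and y1: "av y1 = rho_seq p (Suc j)"
    and y: "av (y0 - y1) \<le> S_const p" and l: "av (l0 - l1) \<le> S_const p"
    and j: "1 \<le> j" and A: "max (av (l0 - l1) * rho_seq p 1) (av (h l0 - h l1)) \<le> A"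
  shows "av (Qlam p av a l0 y0 - Qlam p av a l1 y1) \<le> max (rho_seq p j * av (y0 - y1)) A"
proof -
  obtain L where L: "av L = av (l0 - l1) * rho_seq p j"
    and rest: "av (Qlam p av a l0 y0 - Qlam p av a l1 y1 - L) \<le> max (rho_seq p j * av (y0 - y1)) (av (h l0 - h l1))"
    using Qlam_diff_decomposition[OF l0 l1 y0 y1 y l] by blast
  have "av L \<le> A"
    unfolding L using rho_seq_antimono[OF two_le_p j] av_nonneg[of "l0 - l1"] A
    by (meson max.boundedE mult_left_mono order_trans)
  then have "av (L + (Qlam p av a l0 y0 - Qlam p av a l1 y1 - L)) \<le> max (rho_seq p j * av (y0 - y1)) A"
    using rest A by (intro av_add_le) auto
  then show ?thesis
    by simp
qed

lemma av_Qlam_iter_diff_le: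
  assumes l0: "av (l0 - 1) < 1" and l1: "av (l1 - 1) < 1" and l: "av (l0 - l1) \<le> S_const p"
    and j: "1 \<le> j"
    and A: "max (av (l0 - l1) * rho_seq p 1) (av (h l0 - h l1)) \<le> A" "A \<le> S_const p"
  shows "av x0 = rho_seq p (j + n) \<Longrightarrow> av x1 = rho_seq p (j + n) \<Longrightarrow> av (x0 - x1) \<le> S_const p \<Longrightarrow>
    av ((Qlam p av a l0 ^^ n) x0) = rho_seq p j \<and> av ((Qlam p av a l1 ^^ n) x1) = rho_seq p j \<and>
    av ((Qlam p av a l0 ^^ n) x0 - (Qlam p av a l1 ^^ n) x1) \<le> max ((\<Prod>k\<in>{j..<j + n}. rho_seq p k) * av (x0 - x1)) A"
proof (induction n arbitrary: x0 x1)
  case (Suc n)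
  define P where "P = (\<Prod>k\<in>{j..<j + n}. rho_seq p k)"
  define r where "r = rho_seq p (j + n)"
  define y0 where "y0 = Qlam p av a l0 x0"
  define y1 where "y1 = Qlam p av a l1 x1"
  have r: "0 \<le> r" "r \<le> 1"
    unfolding r_def using rho_seq_pos rho_seq_le_1 two_le_p by (auto simp: less_imp_le)
  have P: "0 \<le> P" "P \<le> 1"
    unfolding P_def using less_imp_le[OF rho_seq_pos[OF two_le_p]] rho_seq_le_1[OF two_le_p]
    by (auto intro!: prod_nonneg prod_le_1)
  have x0: "av x0 = rho_seq p (Suc (j + n))" and x1: "av x1 = rho_seq p (Suc (j + n))"
    using Suc.prems by simp_all
  have y_level: "av y0 = rho_seq p (j + n)" "av y1 = rho_seq p (j + n)"
    unfolding y0_def y1_def using av_Qlam_level l0 l1 x0 x1 by simp_all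
  have y: "av (y0 - y1) \<le> max (r * av (x0 - x1)) A"
    unfolding y0_def y1_def r_def using j by (intro av_Qlam_diff_le[OF l0 l1 x0 x1 Suc.prems(3) l _ A(1)]) simp
  moreover have "r * av (x0 - x1) \<le> S_const p"
    using Suc.prems(3) r av_nonneg[of "x0 - x1"] by (meson mult_left_le_one_le order_trans)
  ultimately have yS: "av (y0 - y1) \<le> S_const p"
    using A(2) by simp
  have "A \<ge> 0"
    using A(1) av_nonneg[of "h l0 - h l1"] by simp
  have "P * av (y0 - y1) \<le> P * max (r * av (x0 - x1)) A"
    using y P(1) by (rule mult_left_mono)
  also have "\<dots> = max (P * (r * av (x0 - x1))) (P * A)"
    using P(1) by (simp add: max_mult_distrib_left)
  also have "\<dots> \<le> max ((P * r) * av (x0 - x1)) A"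
    using mult_left_le_one_le[OF \<open>A \<ge> 0\<close> P] by (intro max.mono) (simp_all add: mult.assoc)
  finally have "max (P * av (y0 - y1)) A \<le> max ((\<Prod>k\<in>{j..<j + Suc n}. rho_seq p k) * av (x0 - x1)) A"
    by (simp add: P_def r_def prod.atLeastLessThan_Suc)
  with Suc.IH[OF y_level yS] show ?case
    unfolding y0_def y1_def P_def[symmetric] funpow_Suc_right comp_def by linarith
qed simp

theorem av_Qlam_iter_diff_eq:
  assumes m: "1 \<le> m"
    and x0: "av x0 = rho_seq p m" and x1: "av x1 = rho_seq p m" and x: "av (x0 - x1) \<le> S_const p"
    and l0: "av (l0 - 1) < 1" and l1: "av (l1 - 1) < 1"
    and less: "(\<Prod>k\<in>{1..<m}. rho_seq p k) * av (x0 - x1) < av (l0 - l1)"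
    and l: "av (l0 - l1) \<le> S_const p"
  shows "av ((Qlam p av a l0 ^^ m) x0 - (Qlam p av a l1 ^^ m) x1) = av (l0 - l1)"
proof -
  obtain n where n: "m = Suc n"
    using m by (cases m) auto
  define y0 where "y0 = (Qlam p av a l0 ^^ n) x0"
  define y1 where "y1 = (Qlam p av a l1 ^^ n) x1"
  have "0 \<le> (\<Prod>k\<in>{1..<m}. rho_seq p k) * av (x0 - x1)"
    using less_imp_le[OF rho_seq_pos[OF two_le_p]] by (intro mult_nonneg_nonneg prod_nonneg av_nonneg)
  then have l_pos: "0 < av (l0 - l1)"
    using less by linarith
  have h_less: "av (h l0 - h l1) < av (l0 - l1)"
    using av_hfix_diff[OF l0 l1] hfix_near_1[OF l1] M_div_p_less_1 l_pos by (simp add: mult_less_cancel_left1)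
  have "av (l0 - l1) * rho_seq p 1 < av (l0 - l1)"
    using l_pos rho_seq_Suc_less_1[OF two_le_p, of 0] by simp
  then have A: "max (av (l0 - l1) * rho_seq p 1) (av (h l0 - h l1)) < av (l0 - l1)"
    using h_less by simp
  then have y: "av y0 = rho_seq p (Suc 0)" "av y1 = rho_seq p (Suc 0)" "av (y0 - y1) < av (l0 - l1)"
    using av_Qlam_iter_diff_le[OF l0 l1 l order_refl order_refl, of x0 n x1] x0 x1 x less l
    unfolding y0_def y1_def n by auto
  obtain L where L: "av L = av (l0 - l1)"
    and rest: "av (Qlam p av a l0 y0 - Qlam p av a l1 y1 - L) \<le> max (av (y0 - y1)) (av (h l0 - h l1))"
    using Qlam_diff_decomposition[OF l0 l1 y(1,2) _ l] y(3) l by fastforce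
  have "av (Qlam p av a l0 y0 - Qlam p av a l1 y1 - L) < av L"
    using rest y(3) h_less L by linarith
  then have "av (Qlam p av a l0 y0 - Qlam p av a l1 y1) = av (l0 - l1)"
    using L av_eq_of_av_diff_less by metis
  then show ?thesis
    by (simp add: n y0_def y1_def)
qed

end

section \<open>Instantiation for C_p\<close>

context nonarch_abs
begin

lemma in_HB_coeff_le_norm_HB:
  assumes "in_HB av rh a" "1 \<le> rh"
  shows "av (a i) \<le> norm_HB av rh a"
proof -
  have "bdd_above (range (\<lambda>i. av (a i) * rh ^ i))"
    using assms(1) unfolding in_HB_def by (intro Bseq_bdd_above convergent_imp_Bseq convergentI)
  then have "av (a i) * rh ^ i \<le> norm_HB av rh a"
    unfolding norm_HB_def by (intro cSUP_upper) auto
  moreover have "av (a i) \<le> av (a i) * rh ^ i"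
    using assms(2) av_nonneg[of "a i"] by (simp add: mult_le_cancel_left1 one_le_power)
  ultimately show ?thesis
    by linarith
qed

lemma in_HB_coeff_tendsto_0:
  assumes "in_HB av rh a" "1 \<le> rh"
  shows "(\<lambda>i. av (a i)) \<longlonglongrightarrow> 0"
proof (rule Lim_null_comparison[OF _ assms(1)[unfolded in_HB_def]], intro always_eventually allI)
  show "norm (av (a i)) \<le> av (a i) * rh ^ i" for i
    using assms(2) av_nonneg[of "a i"] by (simp add: mult_le_cancel_left1 one_le_power)
qed

end

lemma is_Cp_imp_complete_nonarch_abs: "is_Cp p av \<Longrightarrow> complete_nonarch_abs av"
  by unfold_locales (simp_all add: is_Cp_def)

lemma is_Cp_imp_padic_abs: "prime p \<Longrightarrow> is_Cp p av \<Longrightarrow> padic_abs av p"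
  by unfold_locales (simp_all add: is_Cp_def)

lemma small_perturbation_of_in_HB:
  assumes "prime p" "is_Cp p av" "1 < rh" "in_HB av rh a" "norm_HB av rh a < rho p"
  shows "small_perturbation av p a (norm_HB av rh a)"
proof -
  interpret complete_nonarch_abs av
    using assms(2) by (rule is_Cp_imp_complete_nonarch_abs)
  interpret padic_abs av p
    using assms(1,2) by (rule is_Cp_imp_padic_abs)
  show ?thesis
    using assms(3-5) in_HB_coeff_le_norm_HB in_HB_coeff_tendsto_0
    by unfold_locales auto
qed

theorem lemma3p13:
  fixes p :: nat and av :: "'a::field \<Rightarrow> real" and rh :: real and a :: "nat \<Rightarrow> 'a"
    and m :: nat and x0 x1 l0 l1 :: 'a
  assumes "prime p" and "is_Cp p av"
    and "rh > 1" and "\<exists>c. c \<noteq> 0 \<and> av c = rh"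
    and "in_HB av rh a" and "norm_HB av rh a < rho p"
    and "m \<ge> 1"
    and "av x0 = rho_seq p m" and "av x1 = rho_seq p m"
    and "av (x0 - x1) \<le> S_const p"
    and "av (l0 - 1) < 1" and "av (l1 - 1) < 1"
    and "(\<Prod>k\<in>{1..<m}. rho_seq p k) * av (x0 - x1) < av (l0 - l1)"
    and "av (l0 - l1) \<le> S_const p"
  shows "av ((Qlam p av a l0 ^^ m) x0 - (Qlam p av a l1 ^^ m) x1) = av (l0 - l1)"
proof -
  interpret small_perturbation av p a "norm_HB av rh a"
    using assms(1-3,5,6) by (rule small_perturbation_of_in_HB)
  show ?thesis
    using assms(7-14) by (rule av_Qlam_iter_diff_eq)
qed

end
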